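(* The pencils in $\mathcal G$ are exactly those subsets of $\mathcal G$ with more than one element that are intersections of two distinct maximal adjacency cliques of $\mathcal G$.
   Context: $K$ is a (not necessarily commutative) field and $V$ is a left vector space over $K$ of arbitrary (possibly infinite) dimension with $\dim V>2$. $\mathcal G:=\{X\le V\mid X\cong V/X\}$, assumed nonempty. Two elements $X,Y\in\mathcal G$ are adjacent if $\dim((X+Y)/X)=\dim((X+Y)/Y)=1$. A maximal adjacency clique is a subset of $\mathcal G$ of mutually adjacent elements which is maximal with respect to inclusion among such subsets. A pencil is a set $\mathcal G[M,N]:=\{X\in\mathcal G\mid M<X<N\}$ (strict inclusions), where $M,N\le V$ are subspaces such that there exists $X\in\mathcal G$ with $M\le X\le N$ and $\dim(X/M)=\dim(N/X)=1$. *)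

theory Defs
  imports Main
begin

text \<open>Left vector space over a (not necessarily commutative) field, i.e. a division ring.
  The vector space V is the whole carrier type 'v; scalar multiplication is sm.\<close>

definition left_vs :: "('k::division_ring \<Rightarrow> 'v::ab_group_add \<Rightarrow> 'v) \<Rightarrow> bool" where
  "left_vs sm \<longleftrightarrow>
     (\<forall>c v w. sm c (v + w) = sm c v + sm c w) \<and>
     (\<forall>c d v. sm (c + d) v = sm c v + sm d v) \<and>
     (\<forall>c d v. sm (c * d) v = sm c (sm d v)) \<and>
     (\<forall>v. sm 1 v = v)"

definition subspace :: "('k::division_ring \<Rightarrow> 'v::ab_group_add \<Rightarrow> 'v) \<Rightarrow> 'v set \<Rightarrow> bool" where
  "subspace sm X \<longleftrightarrow> 0 \<in> X \<and> (\<forall>x\<in>X. \<forall>y\<in>X. x + y \<in> X) \<and> (\<forall>c. \<forall>x\<in>X. sm c x \<in> X)"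

definition ssum :: "'v::ab_group_add set \<Rightarrow> 'v set \<Rightarrow> 'v set" where
  "ssum X Y = {x + y | x y. x \<in> X \<and> y \<in> Y}"

definition coset :: "'v::ab_group_add set \<Rightarrow> 'v \<Rightarrow> 'v set" where
  "coset X v = {v + x | x. x \<in> X}"

text \<open>X is isomorphic (as a left K-space) to the quotient V/X: there is a bijective linear
  map from X onto the set of cosets of X, with the quotient operations
  (v+X)+(w+X) = (v+w)+X and c(v+X) = cv+X.\<close>
definition iso_quot :: "('k::division_ring \<Rightarrow> 'v::ab_group_add \<Rightarrow> 'v) \<Rightarrow> 'v set \<Rightarrow> bool" where
  "iso_quot sm X \<longleftrightarrow>
     (\<exists>f. bij_betw f X (range (coset X)) \<and>
          (\<forall>x\<in>X. \<forall>y\<in>X. \<forall>v w. f x = coset X v \<and> f y = coset X w \<longrightarrow> f (x + y) = coset X (v + w)) \<and>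
          (\<forall>c. \<forall>x\<in>X. \<forall>v. f x = coset X v \<longrightarrow> f (sm c x) = coset X (sm c v)))"

text \<open>For subspaces X \<subseteq> Y: dim(Y/X) = 1, i.e. Y/X has a basis consisting of one vector
  (the class of some v \<in> Y - X spans Y/X).\<close>
definition quot_dim1 :: "('k::division_ring \<Rightarrow> 'v::ab_group_add \<Rightarrow> 'v) \<Rightarrow> 'v set \<Rightarrow> 'v set \<Rightarrow> bool" where
  "quot_dim1 sm Y X \<longleftrightarrow> X \<subseteq> Y \<and> (\<exists>v\<in>Y. v \<notin> X \<and> (\<forall>w\<in>Y. \<exists>c. w - sm c v \<in> X))"

text \<open>dim V > 2: V is not spanned by two vectors.\<close>
definition dim_gt2 :: "('k::division_ring \<Rightarrow> 'v::ab_group_add \<Rightarrow> 'v) \<Rightarrow> bool" where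
  "dim_gt2 sm \<longleftrightarrow> \<not> (\<exists>a b. \<forall>v. \<exists>c d. v = sm c a + sm d b)"

definition Gr :: "('k::division_ring \<Rightarrow> 'v::ab_group_add \<Rightarrow> 'v) \<Rightarrow> 'v set set" where
  "Gr sm = {X. subspace sm X \<and> iso_quot sm X}"

definition adjacent :: "('k::division_ring \<Rightarrow> 'v::ab_group_add \<Rightarrow> 'v) \<Rightarrow> 'v set \<Rightarrow> 'v set \<Rightarrow> bool" where
  "adjacent sm X Y \<longleftrightarrow> quot_dim1 sm (ssum X Y) X \<and> quot_dim1 sm (ssum X Y) Y"

definition adj_clique :: "('k::division_ring \<Rightarrow> 'v::ab_group_add \<Rightarrow> 'v) \<Rightarrow> 'v set set \<Rightarrow> bool" where
  "adj_clique sm C \<longleftrightarrow> C \<subseteq> Gr sm \<and> (\<forall>X\<in>C. \<forall>Y\<in>C. X \<noteq> Y \<longrightarrow> adjacent sm X Y)"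

definition max_adj_clique :: "('k::division_ring \<Rightarrow> 'v::ab_group_add \<Rightarrow> 'v) \<Rightarrow> 'v set set \<Rightarrow> bool" where
  "max_adj_clique sm C \<longleftrightarrow> adj_clique sm C \<and> (\<forall>D. adj_clique sm D \<and> C \<subseteq> D \<longrightarrow> D = C)"

definition pencil_set :: "('k::division_ring \<Rightarrow> 'v::ab_group_add \<Rightarrow> 'v) \<Rightarrow> 'v set \<Rightarrow> 'v set \<Rightarrow> 'v set set" where
  "pencil_set sm M N = {X \<in> Gr sm. M \<subset> X \<and> X \<subset> N}"

definition is_pencil :: "('k::division_ring \<Rightarrow> 'v::ab_group_add \<Rightarrow> 'v) \<Rightarrow> 'v set set \<Rightarrow> bool" where
  "is_pencil sm P \<longleftrightarrow>
     (\<exists>M N. subspace sm M \<and> subspace sm N \<and>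
        (\<exists>X\<in>Gr sm. M \<subseteq> X \<and> X \<subseteq> N \<and> quot_dim1 sm X M \<and> quot_dim1 sm N X) \<and>
        P = pencil_set sm M N)"

end

theory Submission
  imports Defs
begin

text \<open>
  Two adjacent elements \<open>X, Y\<close> of a clique force every further member to contain
  \<open>X \<inter> Y\<close> or to lie in \<open>X + Y\<close>; hence every maximal clique is a star
  (all \<open>Z\<close> covering some \<open>M\<close>) or a top (all \<open>Z\<close> covered by some \<open>N\<close>), and two
  distinct maximal cliques through \<open>X \<noteq> Y\<close> are the star of \<open>X \<inter> Y\<close> and the top of
  \<open>X + Y\<close>, which meet in a pencil. Conversely, stars and tops with a member in \<open>\<G>\<close> are
  maximal cliques. This rests on two facts: any two subspaces covering the same \<open>M\<close> are
  related by a transvection, so one lies in \<open>\<G>\<close> iff the other does; and \<open>dim V > 2\<close>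
  excludes lines and hyperplanes from \<open>\<G>\<close>.
\<close>

locale left_vector_space =
  fixes sm :: "'k::division_ring \<Rightarrow> 'v::ab_group_add \<Rightarrow> 'v" (infixr "\<cdot>" 75)
  assumes left_vs: "left_vs sm"
begin

abbreviation "sub \<equiv> subspace sm"
abbreviation "qd1 \<equiv> quot_dim1 sm"

lemma scale_right_distrib: "c \<cdot> (v + w) = c \<cdot> v + c \<cdot> w"
  using left_vs by (simp add: left_vs_def)

lemma scale_left_distrib: "(c + d) \<cdot> v = c \<cdot> v + d \<cdot> v"
  using left_vs by (simp add: left_vs_def)

lemma scale_scale: "(c * d) \<cdot> v = c \<cdot> (d \<cdot> v)"
  using left_vs by (simp add: left_vs_def)

lemma scale_one [simp]: "1 \<cdot> v = v"
  using left_vs by (simp add: left_vs_def)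

lemma scale_zero_right [simp]: "c \<cdot> 0 = 0"
  using scale_right_distrib[of c 0 0] by simp

lemma scale_zero_left [simp]: "0 \<cdot> v = 0"
  using scale_left_distrib[of 0 0 v] by simp

lemma scale_minus_right: "c \<cdot> (- v) = - (c \<cdot> v)"
  by (metis add.right_inverse add_eq_0_iff scale_right_distrib scale_zero_right)

lemma scale_minus_left: "(- c) \<cdot> v = - (c \<cdot> v)"
  by (metis add.right_inverse add_eq_0_iff scale_left_distrib scale_zero_left)

lemma scale_right_diff_distrib: "c \<cdot> (v - w) = c \<cdot> v - c \<cdot> w"
  by (metis diff_conv_add_uminus scale_right_distrib scale_minus_right)

lemma scale_left_diff_distrib: "(c - d) \<cdot> v = c \<cdot> v - d \<cdot> v"
  by (metis diff_conv_add_uminus scale_left_distrib scale_minus_left)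

lemma scale_inverse_cancel [simp]: "c \<noteq> 0 \<Longrightarrow> inverse c \<cdot> (c \<cdot> v) = v"
  by (metis left_inverse scale_scale scale_one)

lemma subspace_zero: "sub X \<Longrightarrow> 0 \<in> X"
  by (simp add: subspace_def)

lemma subspace_add: "sub X \<Longrightarrow> x \<in> X \<Longrightarrow> y \<in> X \<Longrightarrow> x + y \<in> X"
  by (simp add: subspace_def)

lemma subspace_scale: "sub X \<Longrightarrow> x \<in> X \<Longrightarrow> c \<cdot> x \<in> X"
  by (simp add: subspace_def)

lemma subspace_neg: "sub X \<Longrightarrow> x \<in> X \<Longrightarrow> - x \<in> X"
  by (metis scale_minus_left scale_one subspace_scale)

lemma subspace_diff: "sub X \<Longrightarrow> x \<in> X \<Longrightarrow> y \<in> X \<Longrightarrow> x - y \<in> X"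
  by (metis diff_conv_add_uminus subspace_add subspace_neg)

lemma subspace_diff_iff: "sub X \<Longrightarrow> y \<in> X \<Longrightarrow> x - y \<in> X \<longleftrightarrow> x \<in> X"
  by (metis diff_add_cancel subspace_add subspace_diff)

lemma subspace_scale_iff: "sub X \<Longrightarrow> c \<noteq> 0 \<Longrightarrow> c \<cdot> x \<in> X \<longleftrightarrow> x \<in> X"
  by (metis scale_inverse_cancel subspace_scale)

lemma subspace_Int: "sub X \<Longrightarrow> sub Y \<Longrightarrow> sub (X \<inter> Y)"
  by (simp add: subspace_def)

lemma subspace_UNIV: "sub UNIV"
  by (simp add: subspace_def)

lemma subspace_singleton_zero: "sub {0}"
  by (simp add: subspace_def)

lemma subspace_ssum:
  assumes "sub X" "sub Y"
  shows "sub (ssum X Y)"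
  unfolding subspace_def
proof (intro conjI ballI allI)
  show "0 \<in> ssum X Y"
    unfolding ssum_def using assms by (force intro: subspace_zero)
next
  fix a b assume "a \<in> ssum X Y" "b \<in> ssum X Y"
  then obtain x y x' y' where "a = x + y" "b = x' + y'" "x \<in> X" "y \<in> Y" "x' \<in> X" "y' \<in> Y"
    unfolding ssum_def by blast
  then have "a + b = (x + x') + (y + y')" "x + x' \<in> X" "y + y' \<in> Y"
    using assms by (auto simp: algebra_simps intro: subspace_add)
  then show "a + b \<in> ssum X Y"
    unfolding ssum_def by blast
next
  fix c a assume "a \<in> ssum X Y"
  then obtain x y where "a = x + y" "x \<in> X" "y \<in> Y"
    unfolding ssum_def by blast
  then have "c \<cdot> a = c \<cdot> x + c \<cdot> y" "c \<cdot> x \<in> X" "c \<cdot> y \<in> Y"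
    using assms by (auto simp: scale_right_distrib intro: subspace_scale)
  then show "c \<cdot> a \<in> ssum X Y"
    unfolding ssum_def by blast
qed

lemma ssum_commute: "ssum X Y = ssum Y X"
  unfolding ssum_def by (metis (no_types, lifting) add.commute)

lemma ssum_upper1: "sub Y \<Longrightarrow> X \<subseteq> ssum X Y"
  unfolding ssum_def by (force dest: subspace_zero)

lemma ssum_upper2: "sub X \<Longrightarrow> Y \<subseteq> ssum X Y"
  unfolding ssum_def by (force dest: subspace_zero)

lemma ssum_least: "sub Z \<Longrightarrow> X \<subseteq> Z \<Longrightarrow> Y \<subseteq> Z \<Longrightarrow> ssum X Y \<subseteq> Z"
  unfolding ssum_def by (auto intro: subspace_add)

lemma ssum_mono: "X \<subseteq> X' \<Longrightarrow> Y \<subseteq> Y' \<Longrightarrow> ssum X Y \<subseteq> ssum X' Y'"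
  unfolding ssum_def by blast

lemma quot_dim1_subset: "qd1 Y X \<Longrightarrow> X \<subseteq> Y"
  by (simp add: quot_dim1_def)

lemma quot_dim1_neq: "qd1 Y X \<Longrightarrow> X \<noteq> Y"
  by (auto simp: quot_dim1_def)

lemma quot_dim1I:
  "X \<subseteq> Y \<Longrightarrow> v \<in> Y \<Longrightarrow> v \<notin> X \<Longrightarrow> (\<And>w. w \<in> Y \<Longrightarrow> \<exists>c. w - c \<cdot> v \<in> X) \<Longrightarrow> qd1 Y X"
  by (auto simp: quot_dim1_def)

lemma quot_dim1_spanned:
  assumes q: "qd1 Y X" and "sub X" and v: "v \<in> Y" "v \<notin> X" and w: "w \<in> Y"
  shows "\<exists>c. w - c \<cdot> v \<in> X"
proof -
  obtain v0 where v0: "v0 \<in> Y" "v0 \<notin> X" "\<forall>w\<in>Y. \<exists>c. w - c \<cdot> v0 \<in> X"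
    using q by (auto simp: quot_dim1_def)
  obtain a where a: "v - a \<cdot> v0 \<in> X" using v0 v by blast
  obtain b where b: "w - b \<cdot> v0 \<in> X" using v0 w by blast
  have "a \<noteq> 0" using a v by auto
  then have "w - (b * inverse a) \<cdot> v = (w - b \<cdot> v0) - (b * inverse a) \<cdot> (v - a \<cdot> v0)"
    by (simp add: scale_right_diff_distrib scale_scale[symmetric] mult.assoc)
  also have "\<dots> \<in> X"
    by (intro subspace_diff subspace_scale \<open>sub X\<close> a b)
  finally show ?thesis by blast
qed

lemma quot_dim1_between_eq_top:
  assumes q: "qd1 B A" and "sub A" "sub C" "A \<subseteq> C" "C \<subseteq> B" "C \<noteq> A"
  shows "C = B"
proof -
  obtain c0 where c0: "c0 \<in> C" "c0 \<notin> A" using assms by blast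
  have "w \<in> C" if w: "w \<in> B" for w
  proof -
    obtain c where "w - c \<cdot> c0 \<in> A"
      using quot_dim1_spanned[OF q \<open>sub A\<close> _ c0(2) w] c0 assms by blast
    then show "w \<in> C"
      using assms c0 subspace_diff_iff subspace_scale by blast
  qed
  then show ?thesis using assms by blast
qed

lemma quot_dim1_between_eq_bot:
  "qd1 B A \<Longrightarrow> sub A \<Longrightarrow> sub C \<Longrightarrow> A \<subseteq> C \<Longrightarrow> C \<subseteq> B \<Longrightarrow> C \<noteq> B \<Longrightarrow> C = A"
  using quot_dim1_between_eq_top by blast

definition span_insert :: "'v set \<Rightarrow> 'v \<Rightarrow> 'v set" where
  "span_insert M v = {m + c \<cdot> v | m c. m \<in> M}"

lemma subspace_span_insert:
  assumes "sub M"
  shows "sub (span_insert M v)"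
  unfolding subspace_def span_insert_def
proof (intro conjI ballI allI)
  show "0 \<in> {m + c \<cdot> v |m c. m \<in> M}"
    using subspace_zero[OF assms] by (metis (mono_tags, lifting) add_0 mem_Collect_eq scale_zero_left)
next
  fix x y assume "x \<in> {m + c \<cdot> v |m c. m \<in> M}" "y \<in> {m + c \<cdot> v |m c. m \<in> M}"
  then obtain m c m' c' where "x = m + c \<cdot> v" "y = m' + c' \<cdot> v" "m \<in> M" "m' \<in> M"
    by blast
  then have "x + y = (m + m') + (c + c') \<cdot> v" "m + m' \<in> M"
    using assms by (auto simp: scale_left_distrib algebra_simps intro: subspace_add)
  then show "x + y \<in> {m + c \<cdot> v |m c. m \<in> M}" by blast
next
  fix d x assume "x \<in> {m + c \<cdot> v |m c. m \<in> M}"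
  then obtain m c where "x = m + c \<cdot> v" "m \<in> M" by blast
  then have "d \<cdot> x = d \<cdot> m + (d * c) \<cdot> v" "d \<cdot> m \<in> M"
    using assms by (auto simp: scale_right_distrib scale_scale intro: subspace_scale)
  then show "d \<cdot> x \<in> {m + c \<cdot> v |m c. m \<in> M}" by blast
qed

lemma span_insert_upper: "M \<subseteq> span_insert M v"
  unfolding span_insert_def by (force intro: exI[of _ 0])

lemma span_insert_vector: "sub M \<Longrightarrow> v \<in> span_insert M v"
  unfolding span_insert_def by (force intro: exI[of _ 0] exI[of _ 1] dest: subspace_zero)

lemma span_insert_least: "sub U \<Longrightarrow> M \<subseteq> U \<Longrightarrow> v \<in> U \<Longrightarrow> span_insert M v \<subseteq> U"
  unfolding span_insert_def by (auto intro: subspace_add subspace_scale)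

lemma quot_dim1_span_insert:
  assumes "sub M" "v \<notin> M"
  shows "qd1 (span_insert M v) M"
proof (rule quot_dim1I[OF span_insert_upper span_insert_vector[OF assms(1)] assms(2)])
  fix w assume "w \<in> span_insert M v"
  then obtain m c where "w = m + c \<cdot> v" "m \<in> M"
    unfolding span_insert_def by blast
  then show "\<exists>c. w - c \<cdot> v \<in> M" by (intro exI[of _ c]) simp
qed

lemma quot_dim1_eq_span_insert:
  assumes "qd1 X M" "sub M" "sub X" "v \<in> X" "v \<notin> M"
  shows "X = span_insert M v"
  using quot_dim1_between_eq_top[OF assms(1,2) subspace_span_insert[OF assms(2)]]
    span_insert_upper span_insert_least[OF assms(3) quot_dim1_subset[OF assms(1)] assms(4)]
    span_insert_vector[OF assms(2)] assms(5) by blast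

text \<open>The second isomorphism theorem X/(X \<inter> Y) \<cong> (X+Y)/Y, for one-dimensional quotients.\<close>

lemma quot_dim1_Int_iff_ssum:
  assumes "sub X" "sub Y"
  shows "qd1 X (X \<inter> Y) \<longleftrightarrow> qd1 (ssum X Y) Y"
proof
  assume q: "qd1 X (X \<inter> Y)"
  then obtain x where x: "x \<in> X" "x \<notin> Y"
    unfolding quot_dim1_def by blast
  show "qd1 (ssum X Y) Y"
  proof (rule quot_dim1I[OF ssum_upper2[OF assms(1)]])
    show "x \<in> ssum X Y" "x \<notin> Y" using x ssum_upper1[OF assms(2)] by auto
    fix w assume "w \<in> ssum X Y"
    then obtain a b where ab: "w = a + b" "a \<in> X" "b \<in> Y"
      unfolding ssum_def by blast
    obtain c where c: "a - c \<cdot> x \<in> X \<inter> Y"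
      using quot_dim1_spanned[OF q subspace_Int[OF assms] x(1) _ ab(2)] x(2) by blast
    have "w - c \<cdot> x = (a - c \<cdot> x) + b" using ab(1) by simp
    also have "\<dots> \<in> Y" using c ab(3) subspace_add[OF assms(2)] by blast
    finally show "\<exists>c. w - c \<cdot> x \<in> Y" by blast
  qed
next
  assume q: "qd1 (ssum X Y) Y"
  then obtain v where v: "v \<in> ssum X Y" "v \<notin> Y" "\<forall>w\<in>ssum X Y. \<exists>c. w - c \<cdot> v \<in> Y"
    unfolding quot_dim1_def by blast
  obtain x y where xy: "v = x + y" "x \<in> X" "y \<in> Y"
    using v(1) unfolding ssum_def by blast
  have "x \<notin> Y" using xy v(2) subspace_add[OF assms(2)] by blast
  show "qd1 X (X \<inter> Y)"
  proof (rule quot_dim1I)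
    show "X \<inter> Y \<subseteq> X" "x \<in> X" "x \<notin> X \<inter> Y" using xy \<open>x \<notin> Y\<close> by auto
    fix w assume w: "w \<in> X"
    then obtain c where c: "w - c \<cdot> v \<in> Y" using v ssum_upper1[OF assms(2)] by blast
    have "w - c \<cdot> x = (w - c \<cdot> v) + c \<cdot> y"
      using xy by (simp add: scale_right_distrib algebra_simps)
    also have "\<dots> \<in> Y" using c xy assms(2) by (intro subspace_add subspace_scale)
    finally have "w - c \<cdot> x \<in> Y" .
    moreover have "w - c \<cdot> x \<in> X" using w xy assms(1) by (intro subspace_diff subspace_scale)
    ultimately show "\<exists>c. w - c \<cdot> x \<in> X \<inter> Y" by blast
  qed
qed


lemma Gr_subspace: "X \<in> Gr sm \<Longrightarrow> sub X"
  by (simp add: Gr_def)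

lemma adjacent_sym: "adjacent sm X Y \<longleftrightarrow> adjacent sm Y X"
  unfolding adjacent_def by (metis ssum_commute)

lemma adjacent_iff_Int:
  "sub X \<Longrightarrow> sub Y \<Longrightarrow> adjacent sm X Y \<longleftrightarrow> qd1 X (X \<inter> Y) \<and> qd1 Y (X \<inter> Y)"
  unfolding adjacent_def
  using quot_dim1_Int_iff_ssum[of X Y] quot_dim1_Int_iff_ssum[of Y X]
  by (simp add: inf_commute ssum_commute conj_commute)

lemma adjacent_not_subset: "adjacent sm X Y \<Longrightarrow> sub X \<Longrightarrow> \<not> Y \<subseteq> X"
proof
  assume "adjacent sm X Y" "sub X" "Y \<subseteq> X"
  moreover have "qd1 (ssum X Y) X"
    using \<open>adjacent sm X Y\<close> by (simp add: adjacent_def)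
  ultimately have "ssum X Y = X"
    using ssum_least[of X X Y] quot_dim1_subset by blast
  then show False
    using \<open>qd1 (ssum X Y) X\<close> quot_dim1_neq by metis
qed

lemma adjacent_Int_eq_bottom:
  assumes q: "qd1 X M" and "sub M" "sub X" "sub Z" "adjacent sm X Z" "M \<subseteq> Z"
  shows "X \<inter> Z = M"
proof (rule quot_dim1_between_eq_bot[OF q \<open>sub M\<close>])
  show "sub (X \<inter> Z)" using subspace_Int assms by blast
  show "M \<subseteq> X \<inter> Z" using quot_dim1_subset[OF q] \<open>M \<subseteq> Z\<close> by blast
  have "\<not> X \<subseteq> Z"
    using adjacent_not_subset adjacent_sym \<open>adjacent sm X Z\<close> \<open>sub Z\<close> by blast
  then show "X \<inter> Z \<noteq> X" by blast
qed blast

lemma adjacent_ssum_eq_top: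
  assumes q: "qd1 N X" and "sub N" "sub X" "sub Z" "adjacent sm X Z" "Z \<subseteq> N"
  shows "ssum X Z = N"
proof (rule quot_dim1_between_eq_top[OF q \<open>sub X\<close>])
  show "sub (ssum X Z)" using subspace_ssum assms by blast
  show "X \<subseteq> ssum X Z" using ssum_upper1 \<open>sub Z\<close> by blast
  show "ssum X Z \<subseteq> N" using ssum_least quot_dim1_subset[OF q] assms by blast
  show "ssum X Z \<noteq> X"
    using adjacent_not_subset ssum_upper2 \<open>adjacent sm X Z\<close> \<open>sub X\<close> by blast
qed

lemma quot_dim1_same_bottom_adjacent:
  assumes qX: "qd1 X M" and qY: "qd1 Y M" and "sub M" "sub X" "sub Y" "X \<noteq> Y"
  shows "adjacent sm X Y"
proof -
  have "X \<inter> Y \<noteq> X"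
  proof
    assume "X \<inter> Y = X"
    then have "X = Y"
      using quot_dim1_between_eq_top[OF qY \<open>sub M\<close> \<open>sub X\<close>] quot_dim1_subset[OF qX]
        quot_dim1_neq[OF qX] by blast
    then show False using \<open>X \<noteq> Y\<close> by blast
  qed
  moreover have "M \<subseteq> X \<inter> Y"
    using quot_dim1_subset[OF qX] quot_dim1_subset[OF qY] by blast
  ultimately have "X \<inter> Y = M"
    using quot_dim1_between_eq_bot[OF qX \<open>sub M\<close>] subspace_Int assms(4,5) by blast
  then show ?thesis
    using qX qY adjacent_iff_Int assms(4,5) by simp
qed

lemma quot_dim1_same_top_adjacent:
  assumes qX: "qd1 N X" and qY: "qd1 N Y" and "sub N" "sub X" "sub Y" "X \<noteq> Y"
  shows "adjacent sm X Y"
proof -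
  have "\<not> Y \<subseteq> X"
  proof
    assume "Y \<subseteq> X"
    then have "X = N"
      using quot_dim1_between_eq_top[OF qY \<open>sub Y\<close> \<open>sub X\<close>] quot_dim1_subset[OF qX]
        \<open>X \<noteq> Y\<close> by blast
    then show False using quot_dim1_neq[OF qX] by blast
  qed
  then have "ssum X Y \<noteq> X"
    using ssum_upper2[OF \<open>sub X\<close>, of Y] by blast
  then have "ssum X Y = N"
    using quot_dim1_between_eq_top[OF qX \<open>sub X\<close> subspace_ssum[OF assms(4,5)]
      ssum_upper1[OF \<open>sub Y\<close>] ssum_least[OF \<open>sub N\<close> quot_dim1_subset[OF qX] quot_dim1_subset[OF qY]]]
    by blast
  then show ?thesis
    using qX qY by (simp add: adjacent_def)
qed

subsection \<open>Stars and tops\<close>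

definition star_of :: "'v set \<Rightarrow> 'v set set" where
  "star_of M = {X \<in> Gr sm. qd1 X M}"

definition top_of :: "'v set \<Rightarrow> 'v set set" where
  "top_of N = {X \<in> Gr sm. qd1 N X}"

lemma adj_clique_star_of: "sub M \<Longrightarrow> adj_clique sm (star_of M)"
  unfolding adj_clique_def star_of_def
  by (auto intro: quot_dim1_same_bottom_adjacent dest: Gr_subspace)

lemma adj_clique_top_of: "sub N \<Longrightarrow> adj_clique sm (top_of N)"
  unfolding adj_clique_def top_of_def
  by (auto intro: quot_dim1_same_top_adjacent dest: Gr_subspace)

lemma adjacent_in_star_of:
  assumes "X \<in> star_of M" "Z \<in> Gr sm" "sub M" "adjacent sm X Z" "M \<subseteq> Z"
  shows "Z \<in> star_of M"
proof -
  have "sub X" "sub Z" "qd1 X M"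
    using assms(1,2) Gr_subspace unfolding star_of_def by auto
  then have "X \<inter> Z = M" "qd1 Z (X \<inter> Z)"
    using adjacent_Int_eq_bottom[of X M Z] adjacent_iff_Int[of X Z] assms(3-5) by simp_all
  then show ?thesis
    using assms(2) unfolding star_of_def by simp
qed

lemma adjacent_in_top_of:
  assumes "X \<in> top_of N" "Z \<in> Gr sm" "sub N" "adjacent sm X Z" "Z \<subseteq> N"
  shows "Z \<in> top_of N"
proof -
  have "sub X" "sub Z" "qd1 N X"
    using assms(1,2) Gr_subspace unfolding top_of_def by auto
  then have "ssum X Z = N" "qd1 (ssum X Z) Z"
    using adjacent_ssum_eq_top[of N X Z] assms(3-5) by (simp_all add: adjacent_def)
  then show ?thesis
    using assms(2) unfolding top_of_def by simp
qed

lemma pencil_set_eq_star_Int_top: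
  assumes "sub M" "sub N" "X0 \<in> Gr sm" "qd1 X0 M" "qd1 N X0"
  shows "pencil_set sm M N = star_of M \<inter> top_of N"
proof (intro equalityI subsetI)
  fix Z assume "Z \<in> star_of M \<inter> top_of N"
  then show "Z \<in> pencil_set sm M N"
    unfolding star_of_def top_of_def pencil_set_def
    using quot_dim1_subset quot_dim1_neq by blast
next
  fix Z assume "Z \<in> pencil_set sm M N"
  then have Z: "Z \<in> Gr sm" "M \<subset> Z" "Z \<subset> N"
    unfolding pencil_set_def by auto
  have sX0: "sub X0" and sZ: "sub Z"
    using assms(3) Z(1) Gr_subspace by auto
  show "Z \<in> star_of M \<inter> top_of N"
  proof (cases "Z = X0")
    case True
    then show ?thesis
      using assms(3-5) unfolding star_of_def top_of_def by blast
  next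
    case False
    have "\<not> X0 \<subseteq> Z"
      using quot_dim1_between_eq_bot[OF assms(5) sX0 sZ] Z(3) False by blast
    then have "X0 \<inter> Z = M"
      using quot_dim1_between_eq_bot[OF assms(4,1) subspace_Int[OF sX0 sZ]]
        quot_dim1_subset[OF assms(4)] Z(2) by blast
    have "\<not> Z \<subseteq> X0"
      using quot_dim1_between_eq_top[OF assms(4,1) sZ] Z(2) False by blast
    then have "ssum X0 Z = N"
      using quot_dim1_between_eq_top[OF assms(5) sX0 subspace_ssum[OF sX0 sZ] ssum_upper1[OF sZ]
        ssum_least[OF assms(2) quot_dim1_subset[OF assms(5)]]] Z(3) ssum_upper2[OF sX0, of Z]
      by blast
    have "qd1 Z M"
      using quot_dim1_Int_iff_ssum[OF sZ sX0] assms(5) \<open>X0 \<inter> Z = M\<close> \<open>ssum X0 Z = N\<close>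
      by (simp add: inf_commute ssum_commute)
    moreover have "qd1 N Z"
      using quot_dim1_Int_iff_ssum[OF sX0 sZ] assms(4) \<open>X0 \<inter> Z = M\<close> \<open>ssum X0 Z = N\<close>
      by simp
    ultimately show ?thesis
      using Z(1) unfolding star_of_def top_of_def by blast
  qed
qed


subsection \<open>Every maximal clique is a star or a top\<close>

lemma adjacent_outside_ssum_Int_subset:
  assumes "sub X" "sub Y" "sub Z" "adjacent sm X Z" "adjacent sm Y Z" "\<not> Z \<subseteq> ssum X Y"
  shows "Z \<inter> ssum X Y \<subseteq> X \<inter> Y"
proof -
  have sN: "sub (ssum X Y)" using subspace_ssum[OF assms(1,2)] .
  have "ssum X Z \<inter> ssum X Y = X"
  proof (rule quot_dim1_between_eq_bot[OF _ \<open>sub X\<close>])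
    show "qd1 (ssum X Z) X" using assms(4) by (simp add: adjacent_def)
    show "sub (ssum X Z \<inter> ssum X Y)" using subspace_Int[OF subspace_ssum[OF assms(1,3)] sN] .
    show "X \<subseteq> ssum X Z \<inter> ssum X Y" using ssum_upper1 assms(2,3) by blast
    show "ssum X Z \<inter> ssum X Y \<noteq> ssum X Z" using assms(6) ssum_upper2[OF assms(1), of Z] by blast
  qed blast
  moreover have "ssum Y Z \<inter> ssum X Y = Y"
  proof (rule quot_dim1_between_eq_bot[OF _ \<open>sub Y\<close>])
    show "qd1 (ssum Y Z) Y" using assms(5) by (simp add: adjacent_def)
    show "sub (ssum Y Z \<inter> ssum X Y)" using subspace_Int[OF subspace_ssum[OF assms(2,3)] sN] .
    show "Y \<subseteq> ssum Y Z \<inter> ssum X Y" using ssum_upper1 ssum_upper2 assms(1,3) by blast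
    show "ssum Y Z \<inter> ssum X Y \<noteq> ssum Y Z" using assms(6) ssum_upper2[OF assms(2), of Z] by blast
  qed blast
  ultimately show ?thesis
    using ssum_upper2[OF assms(1), of Z] ssum_upper2[OF assms(2), of Z] by blast
qed

lemma adjacent_outside_ssum_contains_Int:
  assumes "sub X" "sub Y" "sub Z" "adjacent sm X Z" "adjacent sm Y Z" "\<not> Z \<subseteq> ssum X Y"
    and "adjacent sm X Y"
  shows "X \<inter> Y \<subseteq> Z"
proof -
  have "X \<inter> Z \<subseteq> X \<inter> Y"
    using adjacent_outside_ssum_Int_subset[OF assms(1-6)] ssum_upper1[OF assms(2)] by blast
  moreover have "X \<inter> Y \<noteq> X"
    using adjacent_not_subset[OF adjacent_sym[THEN iffD1, OF assms(7)] assms(2)] by blast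
  ultimately have "X \<inter> Y = X \<inter> Z"
    using quot_dim1_between_eq_bot[of X "X \<inter> Z" "X \<inter> Y"] adjacent_iff_Int[OF assms(1,3)] assms(4)
      subspace_Int[OF assms(1,3)] subspace_Int[OF assms(1,2)] by blast
  then show ?thesis by blast
qed

lemma adj_clique_contains_Int_or_in_ssum:
  assumes C: "adj_clique sm C" and "X \<in> C" "Y \<in> C" "X \<noteq> Y"
  shows "(\<forall>Z\<in>C. X \<inter> Y \<subseteq> Z) \<or> (\<forall>Z\<in>C. Z \<subseteq> ssum X Y)"
proof (rule ccontr)
  let ?M = "X \<inter> Y" and ?N = "ssum X Y"
  assume "\<not> ?thesis"
  then obtain Z1 Z2 where Z1: "Z1 \<in> C" "\<not> ?M \<subseteq> Z1" and Z2: "Z2 \<in> C" "\<not> Z2 \<subseteq> ?N"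
    by blast
  have sub: "sub Z" if "Z \<in> C" for Z
    using C that Gr_subspace unfolding adj_clique_def by blast
  have adj: "adjacent sm A B" if "A \<in> C" "B \<in> C" "A \<noteq> B" for A B
    using C that unfolding adj_clique_def by blast
  have sX: "sub X" and sY: "sub Y" and sZ1: "sub Z1" and sZ2: "sub Z2"
    using sub assms(2,3) Z1(1) Z2(1) by auto
  have sM: "sub ?M" and sN: "sub ?N"
    using subspace_Int[OF sX sY] subspace_ssum[OF sX sY] by auto
  have XN: "X \<subseteq> ?N" and YN: "Y \<subseteq> ?N"
    using ssum_upper1[OF sY] ssum_upper2[OF sX] by auto
  have XY: "adjacent sm X Y" using adj assms(2-4) by blast
  have "Z2 \<noteq> X" "Z2 \<noteq> Y" using Z2(2) XN YN by auto
  then have XZ2: "adjacent sm X Z2" and YZ2: "adjacent sm Y Z2"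
    using adj assms(2,3) Z2(1) by auto
  have MZ2: "?M \<subseteq> Z2" and Z2N: "Z2 \<inter> ?N \<subseteq> ?M"
    using adjacent_outside_ssum_contains_Int[OF sX sY sZ2 XZ2 YZ2 Z2(2) XY]
      adjacent_outside_ssum_Int_subset[OF sX sY sZ2 XZ2 YZ2 Z2(2)] by auto
  have "Z1 \<noteq> X" "Z1 \<noteq> Y" using Z1(2) by auto
  then have XZ1: "adjacent sm X Z1" and YZ1: "adjacent sm Y Z1"
    using adj assms(2,3) Z1(1) by auto
  have Z1N: "Z1 \<subseteq> ?N"
    using adjacent_outside_ssum_contains_Int[OF sX sY sZ1 XZ1 YZ1 _ XY] Z1(2) by blast
  have "Z1 \<noteq> Z2" using Z1(2) MZ2 by blast
  then have "qd1 Z1 (Z1 \<inter> Z2)"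
    using adj Z1(1) Z2(1) adjacent_iff_Int[OF sZ1 sZ2] by blast
  moreover have "Z1 \<inter> Z2 = Z1 \<inter> ?M" using Z1N Z2N MZ2 by blast
  ultimately have "qd1 (ssum Z1 ?M) ?M"
    using quot_dim1_Int_iff_ssum[OF sZ1 sM] by simp
  moreover have "ssum Z1 ?M = ?N"
  proof (rule quot_dim1_between_eq_top[OF _ sZ1 subspace_ssum[OF sZ1 sM] ssum_upper1[OF sM]])
    show "qd1 ?N Z1"
      using adjacent_ssum_eq_top[OF _ sN sX sZ1 XZ1 Z1N] XY XZ1 by (simp add: adjacent_def)
    show "ssum Z1 ?M \<subseteq> ?N" using ssum_least[OF sN Z1N] XN by blast
    show "ssum Z1 ?M \<noteq> Z1" using Z1(2) ssum_upper2[OF sZ1, of ?M] by blast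
  qed
  moreover have "X \<noteq> ?M"
    using adjacent_not_subset[OF adjacent_sym[THEN iffD1, OF XY] sY] by blast
  ultimately have "X = ?N"
    using quot_dim1_between_eq_top[OF _ sM sX _ XN] by auto
  then show False
    using XY quot_dim1_neq unfolding adjacent_def by metis
qed

lemma max_adj_clique_eq_star_or_top:
  assumes C: "max_adj_clique sm C" and X: "X \<in> C" and Y: "Y \<in> C" and "X \<noteq> Y"
  shows "C = star_of (X \<inter> Y) \<or> C = top_of (ssum X Y)"
proof -
  let ?M = "X \<inter> Y" and ?N = "ssum X Y"
  have C': "adj_clique sm C" using C unfolding max_adj_clique_def by blast
  have CG: "C \<subseteq> Gr sm" using C' unfolding adj_clique_def by blast
  have adj: "adjacent sm A B" if "A \<in> C" "B \<in> C" "A \<noteq> B" for A B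
    using C' that unfolding adj_clique_def by blast
  have sX: "sub X" and sY: "sub Y" using CG X Y Gr_subspace by auto
  have sM: "sub ?M" and sN: "sub ?N"
    using subspace_Int[OF sX sY] subspace_ssum[OF sX sY] by auto
  have XY: "adjacent sm X Y" using adj X Y \<open>X \<noteq> Y\<close> by blast
  consider "\<forall>Z\<in>C. ?M \<subseteq> Z" | "\<forall>Z\<in>C. Z \<subseteq> ?N"
    using adj_clique_contains_Int_or_in_ssum[OF C' X Y \<open>X \<noteq> Y\<close>] by blast
  then show ?thesis
  proof cases
    case 1
    have "X \<in> star_of ?M"
      using X CG XY adjacent_iff_Int[OF sX sY] unfolding star_of_def by blast
    then have "C \<subseteq> star_of ?M"
      using adjacent_in_star_of[OF _ _ sM] adj X CG 1 by blast
    then show ?thesis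
      using C adj_clique_star_of[OF sM] unfolding max_adj_clique_def by blast
  next
    case 2
    have "X \<in> top_of ?N"
      using X CG XY unfolding top_of_def adjacent_def by blast
    then have "C \<subseteq> top_of ?N"
      using adjacent_in_top_of[OF _ _ sN] adj X CG 2 by blast
    then show ?thesis
      using C adj_clique_top_of[OF sN] unfolding max_adj_clique_def by blast
  qed
qed


subsection \<open>Subspaces isomorphic to their quotient\<close>

text \<open>The map \<open>x \<mapsto> g x + X\<close> is an isomorphism from \<open>X\<close> onto \<open>V/X\<close>; this avoids
  working with cosets.\<close>

definition quot_iso_lift :: "'v set \<Rightarrow> ('v \<Rightarrow> 'v) \<Rightarrow> bool" where
  "quot_iso_lift X g \<longleftrightarrow>
     (\<forall>x\<in>X. \<forall>y\<in>X. g (x + y) - (g x + g y) \<in> X) \<and>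
     (\<forall>c. \<forall>x\<in>X. g (c \<cdot> x) - c \<cdot> g x \<in> X) \<and>
     (\<forall>x\<in>X. g x \<in> X \<longrightarrow> x = 0) \<and>
     (\<forall>v. \<exists>x\<in>X. v - g x \<in> X)"

lemma coset_eq_iff:
  assumes "sub X"
  shows "coset X v = coset X w \<longleftrightarrow> v - w \<in> X"
proof
  assume "coset X v = coset X w"
  moreover have "v \<in> coset X v"
    unfolding coset_def using subspace_zero[OF assms] by force
  ultimately have "v \<in> coset X w" by simp
  then obtain x where "v = w + x" "x \<in> X"
    unfolding coset_def by blast
  then show "v - w \<in> X" by simp
next
  assume d: "v - w \<in> X"
  have "coset X a \<subseteq> coset X b" if "a - b \<in> X" for a b
  proof
    fix u assume "u \<in> coset X a"
    then obtain x where "u = a + x" "x \<in> X"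
      unfolding coset_def by blast
    then have "u = b + ((a - b) + x)" "(a - b) + x \<in> X"
      using subspace_add[OF assms that] by auto
    then show "u \<in> coset X b"
      unfolding coset_def by blast
  qed
  moreover have "w - v \<in> X"
    using subspace_neg[OF assms d] by simp
  ultimately show "coset X v = coset X w"
    using d by blast
qed

lemma quot_iso_lift_diff:
  assumes g: "quot_iso_lift X g" and "sub X" "x \<in> X" "y \<in> X"
  shows "g (x - y) - (g x - g y) \<in> X"
proof -
  have "g x - (g (x - y) + g y) \<in> X"
    using g subspace_diff[OF assms(2-4)] assms(4) unfolding quot_iso_lift_def
    by (metis diff_add_cancel)
  then have "- (g x - (g (x - y) + g y)) \<in> X"
    using subspace_neg[OF \<open>sub X\<close>] by blast
  then show ?thesis by (simp add: algebra_simps)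
qed

lemma iso_quot_imp_quot_iso_lift:
  assumes "sub X" "iso_quot sm X"
  obtains g where "quot_iso_lift X g"
proof -
  obtain f where bij: "bij_betw f X (range (coset X))"
    and f_add: "\<forall>x\<in>X. \<forall>y\<in>X. \<forall>v w. f x = coset X v \<and> f y = coset X w \<longrightarrow> f (x + y) = coset X (v + w)"
    and f_scale: "\<forall>c. \<forall>x\<in>X. \<forall>v. f x = coset X v \<longrightarrow> f (c \<cdot> x) = coset X (c \<cdot> v)"
    using assms(2) unfolding iso_quot_def by blast
  define g where "g x = (SOME v. f x = coset X v)" for x
  have fg: "f x = coset X (g x)" if "x \<in> X" for x
  proof -
    have "\<exists>v. f x = coset X v"
      using bij_betw_apply[OF bij that] by blast
    then show ?thesis
      unfolding g_def by (rule someI_ex)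
  qed
  have "quot_iso_lift X g"
    unfolding quot_iso_lift_def
  proof (intro conjI ballI allI impI)
    fix x y assume x: "x \<in> X" and y: "y \<in> X"
    have "coset X (g (x + y)) = f (x + y)" using fg subspace_add[OF assms(1) x y] by simp
    also have "\<dots> = coset X (g x + g y)" using f_add x y fg by blast
    finally show "g (x + y) - (g x + g y) \<in> X"
      using coset_eq_iff[OF assms(1)] by simp
  next
    fix c x assume x: "x \<in> X"
    have "coset X (g (c \<cdot> x)) = f (c \<cdot> x)" using fg subspace_scale[OF assms(1) x] by simp
    also have "\<dots> = coset X (c \<cdot> g x)" using f_scale x fg by blast
    finally show "g (c \<cdot> x) - c \<cdot> g x \<in> X"
      using coset_eq_iff[OF assms(1)] by simp
  next
    fix x assume x: "x \<in> X" and "g x \<in> X"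
    have "f (0 \<cdot> x) = coset X (0 \<cdot> g x)" using f_scale x fg by blast
    then have "f 0 = coset X 0" by simp
    moreover have "f x = coset X 0"
      using fg[OF x] coset_eq_iff[OF assms(1), of "g x" 0] \<open>g x \<in> X\<close> by simp
    ultimately show "x = 0"
      using inj_onD[OF bij_betw_imp_inj_on[OF bij]] x subspace_zero[OF assms(1)] by simp
  next
    fix v
    have "coset X v \<in> f ` X"
      using bij_betw_imp_surj_on[OF bij] by simp
    then obtain x where "x \<in> X" "coset X v = coset X (g x)"
      using fg by auto
    then show "\<exists>x\<in>X. v - g x \<in> X"
      using coset_eq_iff[OF assms(1)] by blast
  qed
  then show ?thesis by (rule that)
qed

lemma quot_iso_lift_imp_iso_quot:
  assumes sX: "sub X" and g: "quot_iso_lift X g"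
  shows "iso_quot sm X"
proof -
  have g_add: "\<forall>x\<in>X. \<forall>y\<in>X. g (x + y) - (g x + g y) \<in> X"
    and g_scale: "\<forall>c. \<forall>x\<in>X. g (c \<cdot> x) - c \<cdot> g x \<in> X"
    and g_inj: "\<forall>x\<in>X. g x \<in> X \<longrightarrow> x = 0" and g_surj: "\<forall>v. \<exists>x\<in>X. v - g x \<in> X"
    using g unfolding quot_iso_lift_def by blast+
  define f where "f x = coset X (g x)" for x
  have inj: "inj_on f X"
  proof (rule inj_onI)
    fix x y assume x: "x \<in> X" and y: "y \<in> X" and "f x = f y"
    then have "g x - g y \<in> X"
      using coset_eq_iff[OF sX] unfolding f_def by simp
    then have "(g (x - y) - (g x - g y)) + (g x - g y) \<in> X"
      using quot_iso_lift_diff[OF g sX x y] subspace_add[OF sX] by blast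
    then have "g (x - y) \<in> X" by simp
    then have "x - y = 0"
      using g_inj subspace_diff[OF sX x y] by blast
    then show "x = y" by simp
  qed
  have img: "f ` X = range (coset X)"
  proof
    show "f ` X \<subseteq> range (coset X)" unfolding f_def by blast
    show "range (coset X) \<subseteq> f ` X"
    proof
      fix u assume "u \<in> range (coset X)"
      then obtain v where u: "u = coset X v" by blast
      obtain x where "x \<in> X" "v - g x \<in> X" using g_surj by blast
      then show "u \<in> f ` X"
        using u coset_eq_iff[OF sX] unfolding f_def by auto
    qed
  qed
  have add: "f (x + y) = coset X (v + w)"
    if "x \<in> X" "y \<in> X" "f x = coset X v" "f y = coset X w" for x y v w
  proof -
    have "g x - v \<in> X" "g y - w \<in> X"
      using that coset_eq_iff[OF sX] unfolding f_def by auto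
    then have "(g (x + y) - (g x + g y)) + ((g x - v) + (g y - w)) \<in> X"
      using g_add that(1,2) subspace_add[OF sX] by blast
    then show ?thesis
      unfolding f_def using coset_eq_iff[OF sX] by (simp add: algebra_simps)
  qed
  have scale: "f (c \<cdot> x) = coset X (c \<cdot> v)" if "x \<in> X" "f x = coset X v" for c x v
  proof -
    have "g x - v \<in> X"
      using that coset_eq_iff[OF sX] unfolding f_def by auto
    then have "(g (c \<cdot> x) - c \<cdot> g x) + c \<cdot> (g x - v) \<in> X"
      using g_scale that(1) subspace_scale[OF sX] subspace_add[OF sX] by blast
    then show ?thesis
      unfolding f_def using coset_eq_iff[OF sX] by (simp add: scale_right_diff_distrib)
  qed
  show ?thesis
    unfolding iso_quot_def
  proof (intro exI[of _ f] conjI ballI allI impI)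
    show "bij_betw f X (range (coset X))"
      using inj img by (simp add: bij_betw_def)
  qed (use add scale in auto)
qed

lemma Gr_iff_quot_iso_lift: "X \<in> Gr sm \<longleftrightarrow> sub X \<and> (\<exists>g. quot_iso_lift X g)"
  unfolding Gr_def
  using iso_quot_imp_quot_iso_lift quot_iso_lift_imp_iso_quot by blast


lemma Gr_not_quot_dim1_zero:
  assumes "dim_gt2 sm" "X \<in> Gr sm"
  shows "\<not> qd1 X {0}"
proof
  assume "qd1 X {0}"
  then obtain x0 where x0: "x0 \<in> X" "\<forall>w\<in>X. \<exists>c. w = c \<cdot> x0"
    unfolding quot_dim1_def by auto
  have sX: "sub X" using assms(2) Gr_subspace by blast
  obtain g where g: "quot_iso_lift X g" using assms(2) Gr_iff_quot_iso_lift by blast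
  have "\<exists>c d. v = c \<cdot> g x0 + d \<cdot> x0" for v
  proof -
    obtain x where x: "x \<in> X" "v - g x \<in> X"
      using g unfolding quot_iso_lift_def by blast
    obtain c where c: "x = c \<cdot> x0" using x0 x by blast
    have "g (c \<cdot> x0) - c \<cdot> g x0 \<in> X"
      using g x0 unfolding quot_iso_lift_def by blast
    then have "(v - g x) + (g (c \<cdot> x0) - c \<cdot> g x0) \<in> X"
      using subspace_add[OF sX x(2)] by blast
    then obtain d where "v - c \<cdot> g x0 = d \<cdot> x0"
      using x0 c by auto
    then have "v = c \<cdot> g x0 + d \<cdot> x0" by (simp add: algebra_simps)
    then show ?thesis by blast
  qed
  then show False
    using assms(1) unfolding dim_gt2_def by blast
qed

lemma Gr_not_hyperplane:
  assumes "dim_gt2 sm" "X \<in> Gr sm"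
  shows "\<not> qd1 UNIV X"
proof
  assume "qd1 UNIV X"
  then obtain n where n: "n \<notin> X" "\<forall>w. \<exists>c. w - c \<cdot> n \<in> X"
    unfolding quot_dim1_def by blast
  have sX: "sub X" using assms(2) Gr_subspace by blast
  obtain g where g: "quot_iso_lift X g" using assms(2) Gr_iff_quot_iso_lift by blast
  obtain z where z: "z \<in> X" "n - g z \<in> X"
    using g unfolding quot_iso_lift_def by blast
  have X_line: "\<exists>c. x = c \<cdot> z" if x: "x \<in> X" for x
  proof -
    obtain c where c: "g x - c \<cdot> n \<in> X" using n by blast
    have cz: "c \<cdot> z \<in> X" using subspace_scale[OF sX z(1)] .
    have "g (x - c \<cdot> z) - (g x - g (c \<cdot> z)) \<in> X"
      using quot_iso_lift_diff[OF g sX x cz] .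
    moreover have "g (c \<cdot> z) - c \<cdot> g z \<in> X"
      using g z unfolding quot_iso_lift_def by blast
    moreover have "c \<cdot> (n - g z) \<in> X"
      using subspace_scale[OF sX z(2)] .
    moreover have "g (x - c \<cdot> z) = (g (x - c \<cdot> z) - (g x - g (c \<cdot> z))) + (g x - c \<cdot> n)
        - (g (c \<cdot> z) - c \<cdot> g z) + c \<cdot> (n - g z)"
      by (simp add: scale_right_diff_distrib algebra_simps)
    ultimately have "g (x - c \<cdot> z) \<in> X"
      using c subspace_add[OF sX] subspace_diff[OF sX] by metis
    then have "x - c \<cdot> z = 0"
      using g subspace_diff[OF sX x cz] unfolding quot_iso_lift_def by blast
    then show ?thesis by (intro exI[of _ c]) simp
  qed
  have "\<exists>c d. v = c \<cdot> n + d \<cdot> z" for v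
  proof -
    obtain c where "v - c \<cdot> n \<in> X" using n by blast
    then obtain d where "v - c \<cdot> n = d \<cdot> z" using X_line by blast
    then have "v = c \<cdot> n + d \<cdot> z" by (simp add: algebra_simps)
    then show ?thesis by blast
  qed
  then show False
    using assms(1) unfolding dim_gt2_def by blast
qed

subsection \<open>Transvections\<close>

lemma Gr_linear_image:
  assumes X: "X \<in> Gr sm" and "sub X'"
    and \<phi>_add: "\<And>a b. \<phi> (a + b) = \<phi> a + \<phi> b" and \<phi>_scale: "\<And>c a. \<phi> (c \<cdot> a) = c \<cdot> \<phi> a"
    and \<psi>_add: "\<And>a b. \<psi> (a + b) = \<psi> a + \<psi> b" and \<psi>_scale: "\<And>c a. \<psi> (c \<cdot> a) = c \<cdot> \<psi> a"
    and \<phi>_\<psi>: "\<And>v. \<phi> (\<psi> v) = v" and \<psi>_\<phi>: "\<And>v. \<psi> (\<phi> v) = v"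
    and \<phi>_X: "\<And>x. x \<in> X \<Longrightarrow> \<phi> x \<in> X'" and \<psi>_X': "\<And>x. x \<in> X' \<Longrightarrow> \<psi> x \<in> X"
  shows "X' \<in> Gr sm"
proof -
  obtain g where g: "quot_iso_lift X g" using X Gr_iff_quot_iso_lift by blast
  have \<phi>_diff: "\<phi> (a - b) = \<phi> a - \<phi> b" for a b
    using \<phi>_add[of "a - b" b] by (simp add: algebra_simps)
  define g' where "g' x = \<phi> (g (\<psi> x))" for x
  have "quot_iso_lift X' g'"
    unfolding quot_iso_lift_def
  proof (intro conjI ballI allI impI)
    fix x y assume "x \<in> X'" "y \<in> X'"
    then have "\<phi> (g (\<psi> x + \<psi> y) - (g (\<psi> x) + g (\<psi> y))) \<in> X'"
      using \<phi>_X g \<psi>_X' unfolding quot_iso_lift_def by blast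
    then show "g' (x + y) - (g' x + g' y) \<in> X'"
      unfolding g'_def by (simp add: \<psi>_add \<phi>_diff \<phi>_add)
  next
    fix c x assume "x \<in> X'"
    then have "\<phi> (g (c \<cdot> \<psi> x) - c \<cdot> g (\<psi> x)) \<in> X'"
      using \<phi>_X g \<psi>_X' unfolding quot_iso_lift_def by blast
    then show "g' (c \<cdot> x) - c \<cdot> g' x \<in> X'"
      unfolding g'_def by (simp add: \<psi>_scale \<phi>_diff \<phi>_scale)
  next
    fix x assume x: "x \<in> X'" and "g' x \<in> X'"
    then have "g (\<psi> x) \<in> X"
      using \<psi>_X' \<psi>_\<phi> unfolding g'_def by metis
    then have "\<psi> x = 0"
      using g \<psi>_X'[OF x] unfolding quot_iso_lift_def by blast
    then show "x = 0"
      using \<phi>_\<psi>[of x] \<phi>_diff[of 0 0] by simp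
  next
    fix v
    obtain x where x: "x \<in> X" "\<psi> v - g x \<in> X"
      using g unfolding quot_iso_lift_def by blast
    have "v - g' (\<phi> x) = \<phi> (\<psi> v - g x)"
      unfolding g'_def using \<psi>_\<phi> \<phi>_\<psi> \<phi>_diff by simp
    then show "\<exists>x\<in>X'. v - g' x \<in> X'"
      using \<phi>_X x by metis
  qed
  then show ?thesis
    using Gr_iff_quot_iso_lift \<open>sub X'\<close> by blast
qed

text \<open>Since \<open>\<alpha> d = 0\<close>, the transvection \<open>v \<mapsto> v + \<alpha> v \<cdot> d\<close> has inverse
  \<open>v \<mapsto> v - \<alpha> v \<cdot> d\<close>.\<close>

lemma Gr_transvection_image:
  assumes "X \<in> Gr sm" "sub X'"
    and \<alpha>_add: "\<And>v w. \<alpha> (v + w) = \<alpha> v + \<alpha> w" and \<alpha>_scale: "\<And>c v. \<alpha> (c \<cdot> v) = c * \<alpha> v"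
    and "\<alpha> d = 0"
    and "\<And>x. x \<in> X \<Longrightarrow> x + \<alpha> x \<cdot> d \<in> X'" and "\<And>x. x \<in> X' \<Longrightarrow> x - \<alpha> x \<cdot> d \<in> X"
  shows "X' \<in> Gr sm"
proof -
  have \<alpha>_d: "\<alpha> (c \<cdot> d) = 0" for c
    using \<alpha>_scale \<open>\<alpha> d = 0\<close> by simp
  have \<alpha>_minus: "\<alpha> (v - c \<cdot> d) = \<alpha> v" for v c
    using \<alpha>_add[of "v - c \<cdot> d" "c \<cdot> d"] \<alpha>_d by simp
  show ?thesis
  proof (rule Gr_linear_image[OF assms(1,2), of "\<lambda>v. v + \<alpha> v \<cdot> d" "\<lambda>v. v - \<alpha> v \<cdot> d"])
    show "a + b + \<alpha> (a + b) \<cdot> d = a + \<alpha> a \<cdot> d + (b + \<alpha> b \<cdot> d)" for a b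
      by (simp add: \<alpha>_add scale_left_distrib algebra_simps)
    show "c \<cdot> a + \<alpha> (c \<cdot> a) \<cdot> d = c \<cdot> (a + \<alpha> a \<cdot> d)" for c a
      by (simp add: \<alpha>_scale scale_scale scale_right_distrib)
    show "a + b - \<alpha> (a + b) \<cdot> d = a - \<alpha> a \<cdot> d + (b - \<alpha> b \<cdot> d)" for a b
      by (simp add: \<alpha>_add scale_left_distrib algebra_simps)
    show "c \<cdot> a - \<alpha> (c \<cdot> a) \<cdot> d = c \<cdot> (a - \<alpha> a \<cdot> d)" for c a
      by (simp add: \<alpha>_scale scale_scale scale_right_diff_distrib)
    show "v - \<alpha> v \<cdot> d + \<alpha> (v - \<alpha> v \<cdot> d) \<cdot> d = v" for v
      using \<alpha>_minus by simp
    show "v + \<alpha> v \<cdot> d - \<alpha> (v + \<alpha> v \<cdot> d) \<cdot> d = v" for v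
      using \<alpha>_add \<alpha>_d by simp
  qed (use assms(6,7) in auto)
qed


lemma subspace_Union_chain:
  assumes "C \<noteq> {}" "\<forall>H\<in>C. sub H" "\<forall>X\<in>C. \<forall>Y\<in>C. X \<subseteq> Y \<or> Y \<subseteq> X"
  shows "sub (\<Union>C)"
  unfolding subspace_def
proof (intro conjI ballI allI)
  show "0 \<in> \<Union>C" using assms(1,2) subspace_zero by blast
next
  fix x y assume "x \<in> \<Union>C" "y \<in> \<Union>C"
  then obtain X Y where "X \<in> C" "Y \<in> C" "x \<in> X" "y \<in> Y" by blast
  then show "x + y \<in> \<Union>C"
    using assms(2,3) subspace_add by (metis UnionI subsetD)
next
  fix c x assume "x \<in> \<Union>C"
  then show "c \<cdot> x \<in> \<Union>C"
    using assms(2) subspace_scale by blast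
qed

lemma exists_hyperplane_avoiding:
  assumes "sub A" "sub U" "A \<subseteq> U" "w \<in> U" "w \<notin> A"
  obtains H where "sub H" "A \<subseteq> H" "qd1 U H" "w \<notin> H"
proof -
  define F where "F = {H. sub H \<and> A \<subseteq> H \<and> H \<subseteq> U \<and> w \<notin> H}"
  have "\<exists>H\<in>F. \<forall>X\<in>F. H \<subseteq> X \<longrightarrow> X = H"
  proof (rule subset_Zorn_nonempty)
    have "A \<in> F" using assms unfolding F_def by blast
    then show "F \<noteq> {}" by blast
    show "\<Union>C \<in> F" if "C \<noteq> {}" "subset.chain F C" for C
    proof -
      have "C \<subseteq> F" "\<forall>X\<in>C. \<forall>Y\<in>C. X \<subseteq> Y \<or> Y \<subseteq> X"
        using that(2) unfolding subset_chain_def by auto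
      moreover have "\<forall>H\<in>C. sub H"
        using \<open>C \<subseteq> F\<close> unfolding F_def by blast
      ultimately have "sub (\<Union>C)"
        using subspace_Union_chain that(1) by blast
      then show ?thesis
        using \<open>C \<subseteq> F\<close> that(1) unfolding F_def by blast
    qed
  qed
  then obtain H where "H \<in> F" and H_max: "\<forall>X\<in>F. H \<subseteq> X \<longrightarrow> X = H"
    by blast
  then have H: "sub H" "A \<subseteq> H" "H \<subseteq> U" "w \<notin> H"
    unfolding F_def by auto
  have "\<exists>c. y - c \<cdot> w \<in> H" if y: "y \<in> U" for y
  proof (cases "y \<in> H")
    case True
    then show ?thesis by (intro exI[of _ 0]) simp
  next
    case False
    have "span_insert H y \<noteq> H"
      using span_insert_vector[OF H(1), of y] False by blast
    then have "span_insert H y \<notin> F"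
      using H_max span_insert_upper[of H y] by blast
    moreover have "A \<subseteq> span_insert H y"
      using H(2) span_insert_upper[of H y] by blast
    ultimately have "w \<in> span_insert H y"
      using subspace_span_insert[OF H(1)] span_insert_least[OF assms(2) H(3) y]
      unfolding F_def by blast
    then obtain h c where hc: "w = h + c \<cdot> y" "h \<in> H"
      unfolding span_insert_def by blast
    have "c \<noteq> 0" using hc H(4) by auto
    then have "y - inverse c \<cdot> w = - (inverse c \<cdot> h)"
      using hc by (simp add: scale_right_distrib scale_scale[symmetric] algebra_simps)
    also have "\<dots> \<in> H"
      using hc(2) H(1) by (intro subspace_neg subspace_scale)
    finally show ?thesis by blast
  qed
  then have "qd1 U H"
    using quot_dim1I[OF H(3) assms(4) H(4)] by blast
  with H show ?thesis
    using that by blast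
qed

lemma hyperplane_coordinate:
  assumes "sub H" "qd1 UNIV H" "u \<notin> H"
  obtains \<alpha> where "\<And>v w. \<alpha> (v + w) = \<alpha> v + \<alpha> w" "\<And>c v. \<alpha> (c \<cdot> v) = c * \<alpha> v"
    "\<And>v c. v - c \<cdot> u \<in> H \<longleftrightarrow> \<alpha> v = c"
proof -
  define \<alpha> where "\<alpha> v = (SOME c. v - c \<cdot> u \<in> H)" for v
  have \<alpha>_spec: "v - \<alpha> v \<cdot> u \<in> H" for v
  proof -
    have "\<exists>c. v - c \<cdot> u \<in> H"
      using quot_dim1_spanned[OF assms(2,1)] assms(3) by blast
    then show ?thesis
      unfolding \<alpha>_def by (rule someI_ex)
  qed
  have \<alpha>_iff: "v - c \<cdot> u \<in> H \<longleftrightarrow> \<alpha> v = c" for v c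
  proof
    assume "v - c \<cdot> u \<in> H"
    then have "(v - c \<cdot> u) - (v - \<alpha> v \<cdot> u) \<in> H"
      using subspace_diff[OF assms(1) _ \<alpha>_spec] by blast
    then have "(\<alpha> v - c) \<cdot> u \<in> H"
      by (simp add: scale_left_diff_distrib)
    then have "\<alpha> v - c = 0"
      using subspace_scale_iff[OF assms(1)] assms(3) by blast
    then show "\<alpha> v = c" by simp
  qed (use \<alpha>_spec in blast)
  show ?thesis
  proof (rule that)
    show "\<alpha> (v + w) = \<alpha> v + \<alpha> w" for v w
    proof -
      have "(v - \<alpha> v \<cdot> u) + (w - \<alpha> w \<cdot> u) \<in> H"
        using subspace_add[OF assms(1) \<alpha>_spec \<alpha>_spec] .
      then have "(v + w) - (\<alpha> v + \<alpha> w) \<cdot> u \<in> H"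
        by (simp add: scale_left_distrib algebra_simps)
      then show ?thesis
        using \<alpha>_iff by blast
    qed
    show "\<alpha> (c \<cdot> v) = c * \<alpha> v" for c v
    proof -
      have "c \<cdot> (v - \<alpha> v \<cdot> u) \<in> H"
        using subspace_scale[OF assms(1) \<alpha>_spec] .
      then have "c \<cdot> v - (c * \<alpha> v) \<cdot> u \<in> H"
        by (simp add: scale_right_diff_distrib scale_scale)
      then show ?thesis
        using \<alpha>_iff by blast
    qed
  qed (rule \<alpha>_iff)
qed

lemma not_in_span_insert_diff:
  assumes "sub X" "M \<subseteq> X" "u \<in> X" "u \<notin> M" "u' \<notin> X"
  shows "u \<notin> span_insert M (u' - u)"
proof
  assume "u \<in> span_insert M (u' - u)"
  then obtain m c where mc: "u = m + c \<cdot> (u' - u)" "m \<in> M"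
    unfolding span_insert_def by blast
  have "c \<noteq> 0" using mc assms(4) by auto
  have "c \<cdot> u' = (u + c \<cdot> u) - m"
    using mc(1) by (simp add: scale_right_diff_distrib algebra_simps)
  also have "\<dots> \<in> X"
    using assms(1-3) mc(2) by (blast intro: subspace_diff subspace_add subspace_scale)
  finally show False
    using subspace_scale_iff[OF assms(1) \<open>c \<noteq> 0\<close>] assms(5) by blast
qed

lemma Gr_quot_dim1_same_bottom:
  assumes X: "X \<in> Gr sm" and "sub M" "sub X'" and q: "qd1 X M" and q': "qd1 X' M"
  shows "X' \<in> Gr sm"
proof (cases "X' = X")
  case True
  then show ?thesis using X by simp
next
  case False
  have sX: "sub X" using X Gr_subspace by blast
  obtain u where u: "u \<in> X" "u \<notin> M" using q unfolding quot_dim1_def by blast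
  obtain u' where u': "u' \<in> X'" "u' \<notin> M" using q' unfolding quot_dim1_def by blast
  have "u' \<notin> X"
    using quot_dim1_eq_span_insert[OF q \<open>sub M\<close> sX _ u'(2)]
      quot_dim1_eq_span_insert[OF q' \<open>sub M\<close> \<open>sub X'\<close> u'] False by metis
  define d where "d = u' - u"
  obtain H where H: "sub H" "span_insert M d \<subseteq> H" "qd1 UNIV H" "u \<notin> H"
    using exists_hyperplane_avoiding[OF subspace_span_insert[OF \<open>sub M\<close>] subspace_UNIV _ _
        not_in_span_insert_diff[OF sX quot_dim1_subset[OF q] u \<open>u' \<notin> X\<close>]]
    unfolding d_def by blast
  have MH: "M \<subseteq> H" and dH: "d \<in> H"
    using H(2) span_insert_upper span_insert_vector[OF \<open>sub M\<close>] by blast+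
  obtain \<alpha> where \<alpha>_add: "\<And>v w. \<alpha> (v + w) = \<alpha> v + \<alpha> w"
    and \<alpha>_scale: "\<And>c v. \<alpha> (c \<cdot> v) = c * \<alpha> v" and \<alpha>_iff: "\<And>v c. v - c \<cdot> u \<in> H \<longleftrightarrow> \<alpha> v = c"
    using hyperplane_coordinate[OF H(1,3,4)] by blast
  show ?thesis
  proof (rule Gr_transvection_image[OF X \<open>sub X'\<close> \<alpha>_add \<alpha>_scale])
    show "\<alpha> d = 0" using \<alpha>_iff[of d 0] dH by simp
  next
    fix x assume "x \<in> X"
    then obtain a where a: "x - a \<cdot> u \<in> M"
      using quot_dim1_spanned[OF q \<open>sub M\<close> u] by blast
    then have "\<alpha> x = a" using \<alpha>_iff MH by blast
    then have "x + \<alpha> x \<cdot> d = (x - a \<cdot> u) + a \<cdot> u'"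
      unfolding d_def by (simp add: scale_right_diff_distrib algebra_simps)
    also have "\<dots> \<in> X'"
      using a quot_dim1_subset[OF q'] u'(1) \<open>sub X'\<close> by (blast intro: subspace_add subspace_scale)
    finally show "x + \<alpha> x \<cdot> d \<in> X'" .
  next
    fix x assume "x \<in> X'"
    then obtain a where a: "x - a \<cdot> u' \<in> M"
      using quot_dim1_spanned[OF q' \<open>sub M\<close> u'] by blast
    have "x - a \<cdot> u = (x - a \<cdot> u') + a \<cdot> d"
      unfolding d_def by (simp add: scale_right_diff_distrib algebra_simps)
    also have "\<dots> \<in> H"
      using a MH dH H(1) by (blast intro: subspace_add subspace_scale)
    finally have "\<alpha> x = a" using \<alpha>_iff by blast
    then have "x - \<alpha> x \<cdot> d = (x - a \<cdot> u') + a \<cdot> u"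
      unfolding d_def by (simp add: scale_right_diff_distrib algebra_simps)
    also have "\<dots> \<in> X"
      using a quot_dim1_subset[OF q] u(1) sX by (blast intro: subspace_add subspace_scale)
    finally show "x - \<alpha> x \<cdot> d \<in> X" .
  qed
qed

lemma Gr_adjacent:
  assumes "X \<in> Gr sm" "sub Y" "adjacent sm X Y"
  shows "Y \<in> Gr sm"
proof -
  have "sub X" using assms(1) Gr_subspace by blast
  then show ?thesis
    using Gr_quot_dim1_same_bottom[OF assms(1) subspace_Int assms(2)] assms(2,3) adjacent_iff_Int
    by blast
qed


subsection \<open>Stars and tops are maximal cliques\<close>

lemma max_adj_cliqueI:
  assumes C: "adj_clique sm C"
    and maximal: "\<And>Z. Z \<in> Gr sm \<Longrightarrow> (\<And>Y. Y \<in> C \<Longrightarrow> Y \<noteq> Z \<Longrightarrow> adjacent sm Z Y) \<Longrightarrow> Z \<in> C"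
  shows "max_adj_clique sm C"
  unfolding max_adj_clique_def
proof (intro conjI allI impI)
  fix D assume D: "adj_clique sm D \<and> C \<subseteq> D"
  have "Z \<in> C" if "Z \<in> D" for Z
    using maximal[of Z] D that unfolding adj_clique_def by blast
  then show "D = C" using D by blast
qed (rule C)

lemma adjacent_ssum_eq_if_not_subset:
  assumes "sub Z" "sub M" "adjacent sm Z Y" "M \<subseteq> Y" "\<not> M \<subseteq> Z"
  shows "ssum Z M = ssum Z Y"
proof (rule quot_dim1_between_eq_top[OF _ \<open>sub Z\<close> subspace_ssum[OF assms(1,2)] ssum_upper1[OF assms(2)]])
  show "qd1 (ssum Z Y) Z" using assms(3) by (simp add: adjacent_def)
  show "ssum Z M \<subseteq> ssum Z Y" using ssum_mono[OF order_refl assms(4)] .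
  show "ssum Z M \<noteq> Z" using assms(5) ssum_upper2[OF assms(1), of M] by blast
qed

lemma adjacent_Int_eq_if_not_subset:
  assumes "sub Z" "sub N" "sub H" "adjacent sm Z H" "H \<subseteq> N" "\<not> Z \<subseteq> N"
  shows "Z \<inter> N = Z \<inter> H"
proof (rule quot_dim1_between_eq_bot[OF _ subspace_Int[OF assms(1,3)] subspace_Int[OF assms(1,2)]])
  show "qd1 Z (Z \<inter> H)" using adjacent_iff_Int[OF assms(1,3)] assms(4) by blast
  show "Z \<inter> H \<subseteq> Z \<inter> N" using assms(5) by blast
  show "Z \<inter> N \<noteq> Z" using assms(6) by blast
qed blast

lemma span_insert_in_star_of:
  assumes "sub M" "X0 \<in> star_of M" "v \<notin> M"
  shows "span_insert M v \<in> star_of M"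
proof -
  have "qd1 (span_insert M v) M"
    using quot_dim1_span_insert[OF assms(1,3)] .
  moreover have "span_insert M v \<in> Gr sm"
    using Gr_quot_dim1_same_bottom[OF _ assms(1) subspace_span_insert[OF assms(1)] _ calculation]
      assms(2) unfolding star_of_def by blast
  ultimately show ?thesis unfolding star_of_def by blast
qed

lemma top_of_member_avoiding:
  assumes "sub N" "X0 \<in> top_of N" "w \<in> N" "w \<noteq> 0"
  obtains H where "H \<in> top_of N" "w \<notin> H"
proof -
  obtain H where H: "sub H" "qd1 N H" "w \<notin> H"
    using exists_hyperplane_avoiding[OF subspace_singleton_zero assms(1) _ assms(3)]
      subspace_zero[OF assms(1)] assms(4) by blast
  have X0: "X0 \<in> Gr sm" "qd1 N X0"
    using assms(2) unfolding top_of_def by auto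
  have "H \<in> Gr sm"
  proof (cases "H = X0")
    case False
    then have "adjacent sm X0 H"
      using quot_dim1_same_top_adjacent[OF X0(2) H(2) assms(1) Gr_subspace[OF X0(1)] H(1)] by simp
    then show ?thesis
      using Gr_adjacent[OF X0(1) H(1)] by blast
  qed (use X0 in simp)
  then show ?thesis
    using that H unfolding top_of_def by blast
qed

lemma max_adj_clique_star_of:
  assumes dim: "dim_gt2 sm" and sM: "sub M" and X0: "X0 \<in> star_of M"
  shows "max_adj_clique sm (star_of M)"
proof (rule max_adj_cliqueI[OF adj_clique_star_of[OF sM]])
  fix Z assume Z: "Z \<in> Gr sm" and adj: "\<And>Y. Y \<in> star_of M \<Longrightarrow> Y \<noteq> Z \<Longrightarrow> adjacent sm Z Y"
  have sZ: "sub Z" using Z Gr_subspace by blast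
  show "Z \<in> star_of M"
  proof (rule ccontr)
    assume "Z \<notin> star_of M"
    then have ZX0: "adjacent sm Z X0" and "adjacent sm X0 Z"
      using adj[OF X0] adjacent_sym X0 by auto
    then have "\<not> M \<subseteq> Z"
      using adjacent_in_star_of[OF X0 Z sM] \<open>Z \<notin> star_of M\<close> by blast
    have "M \<subseteq> X0" using X0 quot_dim1_subset unfolding star_of_def by blast
    then have "qd1 (ssum Z M) Z"
      using adjacent_ssum_eq_if_not_subset[OF sZ sM ZX0 _ \<open>\<not> M \<subseteq> Z\<close>] ZX0
      by (simp add: adjacent_def)
    then have "ssum Z M \<noteq> UNIV"
      using Gr_not_hyperplane[OF dim Z] by metis
    then obtain v where v: "v \<notin> ssum Z M" by blast
    have vM: "v \<notin> M" using v ssum_upper2[OF sZ, of M] by blast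
    let ?Y = "span_insert M v"
    have "?Y \<noteq> Z"
      using v span_insert_vector[OF sM, of v] ssum_upper1[OF sM, of Z] by blast
    then have "adjacent sm Z ?Y"
      using adj span_insert_in_star_of[OF sM X0 vM] by blast
    then have "ssum Z M = ssum Z ?Y"
      using adjacent_ssum_eq_if_not_subset[OF sZ sM _ span_insert_upper \<open>\<not> M \<subseteq> Z\<close>] by blast
    then show False
      using v span_insert_vector[OF sM, of v] ssum_upper2[OF sZ, of ?Y] by blast
  qed
qed

lemma max_adj_clique_top_of:
  assumes dim: "dim_gt2 sm" and sN: "sub N" and X0: "X0 \<in> top_of N"
  shows "max_adj_clique sm (top_of N)"
proof (rule max_adj_cliqueI[OF adj_clique_top_of[OF sN]])
  fix Z assume Z: "Z \<in> Gr sm" and adj: "\<And>Y. Y \<in> top_of N \<Longrightarrow> Y \<noteq> Z \<Longrightarrow> adjacent sm Z Y"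
  have sZ: "sub Z" using Z Gr_subspace by blast
  have X0': "X0 \<in> Gr sm" "sub X0" using X0 Gr_subspace unfolding top_of_def by auto
  show "Z \<in> top_of N"
  proof (rule ccontr)
    assume "Z \<notin> top_of N"
    then have "adjacent sm X0 Z"
      using adj[OF X0] adjacent_sym X0 by auto
    then have "\<not> Z \<subseteq> N"
      using adjacent_in_top_of[OF X0 Z sN] \<open>Z \<notin> top_of N\<close> by blast
    have "qd1 X0 (X0 \<inter> Z)"
      using adjacent_iff_Int[OF X0'(2) sZ] \<open>adjacent sm X0 Z\<close> by blast
    then have "X0 \<inter> Z \<noteq> {0}"
      using Gr_not_quot_dim1_zero[OF dim X0'(1)] by metis
    then obtain w where w: "w \<in> X0 \<inter> Z" "w \<noteq> 0"
      using subspace_zero[OF X0'(2)] subspace_zero[OF sZ] by blast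
    have wN: "w \<in> N"
      using w X0 quot_dim1_subset unfolding top_of_def by blast
    obtain H where H: "H \<in> top_of N" "w \<notin> H"
      using top_of_member_avoiding[OF sN X0 wN w(2)] by blast
    have sH: "sub H" and HN: "H \<subseteq> N"
      using H(1) Gr_subspace quot_dim1_subset unfolding top_of_def by auto
    have "H \<noteq> Z" using HN \<open>\<not> Z \<subseteq> N\<close> by blast
    then have "Z \<inter> N = Z \<inter> H"
      using adjacent_Int_eq_if_not_subset[OF sZ sN sH _ HN \<open>\<not> Z \<subseteq> N\<close>] adj[OF H(1)] by blast
    then show False
      using w wN H(2) by blast
  qed
qed


lemma pencil_set_nontrivial:
  assumes sM: "sub M" and sN: "sub N" and X0: "X0 \<in> Gr sm" "qd1 X0 M" "qd1 N X0"
  obtains X1 where "X1 \<in> pencil_set sm M N" "X1 \<noteq> X0"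
proof -
  have sX0: "sub X0" using X0(1) Gr_subspace by blast
  obtain u where u: "u \<in> X0" "u \<notin> M" using X0(2) unfolding quot_dim1_def by blast
  obtain n where n: "n \<in> N" "n \<notin> X0" using X0(3) unfolding quot_dim1_def by blast
  have "u + n \<notin> X0"
    using subspace_diff[OF sX0 _ u(1), of "u + n"] n(2) by auto
  moreover have "u + n \<in> N"
    using subspace_add[OF sN _ n(1)] u(1) quot_dim1_subset[OF X0(3)] by blast
  ultimately have y: "u + n \<notin> M" "u + n \<in> N" "u + n \<notin> X0"
    using quot_dim1_subset[OF X0(2)] by auto
  let ?X1 = "span_insert M (u + n)"
  have q1: "qd1 ?X1 M" using quot_dim1_span_insert[OF sM y(1)] .
  have "?X1 \<in> Gr sm"
    using Gr_quot_dim1_same_bottom[OF X0(1) sM subspace_span_insert[OF sM] X0(2) q1] .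
  moreover have "?X1 \<subseteq> N"
    using span_insert_least[OF sN _ y(2)] quot_dim1_subset[OF X0(2)] quot_dim1_subset[OF X0(3)]
    by blast
  moreover have "?X1 \<noteq> N"
  proof
    assume "?X1 = N"
    then have "X0 = N"
      using quot_dim1_between_eq_top[OF q1 sM sX0] quot_dim1_subset[OF X0(2)]
        quot_dim1_subset[OF X0(3)] quot_dim1_neq[OF X0(2)] by auto
    then show False using quot_dim1_neq[OF X0(3)] by simp
  qed
  ultimately have "?X1 \<in> pencil_set sm M N"
    using quot_dim1_subset[OF q1] quot_dim1_neq[OF q1] unfolding pencil_set_def by blast
  moreover have "?X1 \<noteq> X0"
    using span_insert_vector[OF sM] y(3) by blast
  ultimately show ?thesis by (rule that)
qed

lemma pencil_imp_max_adj_clique_Int: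
  assumes dim: "dim_gt2 sm" and "is_pencil sm P"
  shows "P \<subseteq> Gr sm \<and> (\<exists>X\<in>P. \<exists>Y\<in>P. X \<noteq> Y) \<and>
    (\<exists>C1 C2. max_adj_clique sm C1 \<and> max_adj_clique sm C2 \<and> C1 \<noteq> C2 \<and> P = C1 \<inter> C2)"
proof -
  obtain M N X0 where sM: "sub M" and sN: "sub N"
    and X0: "X0 \<in> Gr sm" "qd1 X0 M" "qd1 N X0" and P: "P = pencil_set sm M N"
    using \<open>is_pencil sm P\<close> unfolding is_pencil_def by blast
  have P_eq: "P = star_of M \<inter> top_of N"
    using pencil_set_eq_star_Int_top[OF sM sN X0] P by simp
  have X0_star: "X0 \<in> star_of M" and X0_top: "X0 \<in> top_of N"
    using X0 unfolding star_of_def top_of_def by auto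
  have "star_of M \<noteq> top_of N"
  proof -
    have "N \<noteq> UNIV"
      using Gr_not_hyperplane[OF dim X0(1)] X0(3) by metis
    then obtain v where v: "v \<notin> N" by blast
    then have "v \<notin> M"
      using quot_dim1_subset[OF X0(2)] quot_dim1_subset[OF X0(3)] by blast
    then have "span_insert M v \<in> star_of M"
      using span_insert_in_star_of[OF sM X0_star] by blast
    moreover have "span_insert M v \<notin> top_of N"
      using v span_insert_vector[OF sM, of v] quot_dim1_subset unfolding top_of_def by blast
    ultimately show ?thesis by blast
  qed
  show ?thesis
  proof (intro conjI)
    show "P \<subseteq> Gr sm" using P unfolding pencil_set_def by blast
    obtain X1 where "X1 \<in> P" "X1 \<noteq> X0"
      using pencil_set_nontrivial[OF sM sN X0] P by blast
    moreover have "X0 \<in> P"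
      using P_eq X0_star X0_top by blast
    ultimately show "\<exists>X\<in>P. \<exists>Y\<in>P. X \<noteq> Y" by blast
    show "\<exists>C1 C2. max_adj_clique sm C1 \<and> max_adj_clique sm C2 \<and> C1 \<noteq> C2 \<and> P = C1 \<inter> C2"
      using max_adj_clique_star_of[OF dim sM X0_star] max_adj_clique_top_of[OF dim sN X0_top]
        \<open>star_of M \<noteq> top_of N\<close> P_eq by blast
  qed
qed

lemma max_adj_clique_Int_imp_pencil:
  assumes C1: "max_adj_clique sm C1" and C2: "max_adj_clique sm C2" and "C1 \<noteq> C2"
    and X: "X \<in> C1 \<inter> C2" and Y: "Y \<in> C1 \<inter> C2" and "X \<noteq> Y"
  shows "is_pencil sm (C1 \<inter> C2)"
proof -
  let ?M = "X \<inter> Y" and ?N = "ssum X Y"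
  have XG: "X \<in> Gr sm" and YG: "Y \<in> Gr sm" and XY: "adjacent sm X Y"
    using C1 X Y \<open>X \<noteq> Y\<close> unfolding max_adj_clique_def adj_clique_def by auto
  have sX: "sub X" and sY: "sub Y"
    using XG YG Gr_subspace by auto
  have sM: "sub ?M" and sN: "sub ?N"
    using subspace_Int[OF sX sY] subspace_ssum[OF sX sY] by auto
  have qM: "qd1 X ?M" and qN: "qd1 ?N X"
    using XY adjacent_iff_Int[OF sX sY] by (auto simp: adjacent_def)
  have "C1 = star_of ?M \<or> C1 = top_of ?N" "C2 = star_of ?M \<or> C2 = top_of ?N"
    using max_adj_clique_eq_star_or_top[OF C1 _ _ \<open>X \<noteq> Y\<close>]
      max_adj_clique_eq_star_or_top[OF C2 _ _ \<open>X \<noteq> Y\<close>] X Y by auto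
  then have "C1 \<inter> C2 = star_of ?M \<inter> top_of ?N"
    using \<open>C1 \<noteq> C2\<close> by blast
  also have "\<dots> = pencil_set sm ?M ?N"
    using pencil_set_eq_star_Int_top[OF sM sN XG qM qN] by simp
  finally show ?thesis
    unfolding is_pencil_def
    using sM sN XG qM qN quot_dim1_subset[OF qM] quot_dim1_subset[OF qN] by blast
qed

lemma pencil_iff_max_adj_clique_Int:
  assumes "dim_gt2 sm"
  shows "is_pencil sm P \<longleftrightarrow>
    P \<subseteq> Gr sm \<and> (\<exists>X\<in>P. \<exists>Y\<in>P. X \<noteq> Y) \<and>
    (\<exists>C1 C2. max_adj_clique sm C1 \<and> max_adj_clique sm C2 \<and> C1 \<noteq> C2 \<and> P = C1 \<inter> C2)"
  using pencil_imp_max_adj_clique_Int[OF assms] max_adj_clique_Int_imp_pencil by blast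

end

theorem theorem2p5:
  fixes sm :: "'k::division_ring \<Rightarrow> 'v::ab_group_add \<Rightarrow> 'v"
  assumes "left_vs sm"
    and "dim_gt2 sm"
    and "Gr sm \<noteq> {}"
  shows "\<forall>P. is_pencil sm P \<longleftrightarrow>
           (P \<subseteq> Gr sm \<and> (\<exists>X\<in>P. \<exists>Y\<in>P. X \<noteq> Y) \<and>
            (\<exists>C1 C2. max_adj_clique sm C1 \<and> max_adj_clique sm C2 \<and> C1 \<noteq> C2 \<and> P = C1 \<inter> C2))"
  using left_vector_space.pencil_iff_max_adj_clique_Int[OF left_vector_space.intro[OF assms(1)] assms(2)]
  by blast

end
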